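(* Let $D$ be a Dirac operator for a finite complex spectral triple $(\mathcal A,\mathcal H,\pi,J,\gamma)$ and let $\Omega^1_D:=\mathrm{span}\{\pi(a)[D,\pi(b)]:a,b\in\mathcal A\}\subseteq B(\mathcal H)$. If $\omega\in\Omega^1_D$ satisfies $\pi(a)\omega=\omega\pi(a)$ for all $a\in\mathcal A$, then $\omega=0$.
   Context: Let $\mathcal A=\bigoplus_{i=1}^k M_{n_i}(\mathbb C)$ ($n_i\ge 1$), with involution $a\mapsto a^*$ given by blockwise conjugate transpose. A finite complex spectral triple over $\mathcal A$ consists of: a finite-dimensional complex Hilbert space $\mathcal H$; a faithful $*$-representation $\pi:\mathcal A\to B(\mathcal H)$; an antilinear isometry $J$ of $\mathcal H$ with $J^2=1$ such that $\pi^0(a):=J\pi(a)^*J$ defines a representation of the opposite algebra $\mathcal A^0$ and $[\pi^0(a),\pi(b)]=0$ for all $a,b\in\mathcal A$; and a grading $\gamma\in B(\mathcal H)$ with $\gamma^*=\gamma$, $\gamma^2=1$, $J\gamma=\gamma J$, $\gamma\pi(a)=\pi(a)\gamma$ for all $a$, and $\gamma=\sum_m\pi(x_m)\pi^0(y_m)$ for finitely many $x_m,y_m\in\mathcal A$. A Dirac operator is a self-adjoint $D\in B(\mathcal H)$ with $DJ=JD$, $D\gamma=-\gamma D$ and $[[D,\pi(a)],\pi^0(b)]=0$ for all $a,b\in\mathcal A$. The space $\Omega^1_D$ is (isomorphic to) the first-order differential calculus $\Omega^1(\mathcal A)$ of the spectral triple, an $\mathcal A$-bimodule via left and right multiplication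 by $\pi(\mathcal A)$. *)

theory Defs
  imports "Jordan_Normal_Form.Schur_Decomposition"
begin

text \<open>The algebra A = M_{n_1}(C) (+) ... (+) M_{n_k}(C), with sizes ns = [n_1,...,n_k];
  an element is a list of square complex matrices with the prescribed sizes.\<close>

definition alg :: "nat list \<Rightarrow> complex mat list set" where
  "alg ns = {as. length as = length ns \<and>
                 (\<forall>i<length ns. as ! i \<in> carrier_mat (ns ! i) (ns ! i))}"

definition alg_add :: "complex mat list \<Rightarrow> complex mat list \<Rightarrow> complex mat list" where
  "alg_add as bs = map2 (+) as bs"

definition alg_mult :: "complex mat list \<Rightarrow> complex mat list \<Rightarrow> complex mat list" where
  "alg_mult as bs = map2 (*) as bs"

definition alg_smult :: "complex \<Rightarrow> complex mat list \<Rightarrow> complex mat list" where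
  "alg_smult c as = map (\<lambda>a. c \<cdot>\<^sub>m a) as"

definition alg_star :: "complex mat list \<Rightarrow> complex mat list" where
  "alg_star as = map mat_adjoint as"

text \<open>The Hilbert space H is C^N (complex vectors of dimension N, inner product v \<bullet>c w);
  bounded operators are N x N complex matrices; the adjoint is mat_adjoint.\<close>

definition faithful_star_rep ::
  "nat list \<Rightarrow> nat \<Rightarrow> (complex mat list \<Rightarrow> complex mat) \<Rightarrow> bool" where
  "faithful_star_rep ns N \<pi> \<longleftrightarrow>
     (\<forall>a\<in>alg ns. \<pi> a \<in> carrier_mat N N) \<and>
     (\<forall>a\<in>alg ns. \<forall>b\<in>alg ns. \<pi> (alg_add a b) = \<pi> a + \<pi> b) \<and>
     (\<forall>a\<in>alg ns. \<forall>c. \<pi> (alg_smult c a) = c \<cdot>\<^sub>m \<pi> a) \<and>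
     (\<forall>a\<in>alg ns. \<forall>b\<in>alg ns. \<pi> (alg_mult a b) = \<pi> a * \<pi> b) \<and>
     (\<forall>a\<in>alg ns. \<pi> (alg_star a) = mat_adjoint (\<pi> a)) \<and>
     inj_on \<pi> (alg ns)"

definition antilinear_isometric_involution ::
  "nat \<Rightarrow> (complex vec \<Rightarrow> complex vec) \<Rightarrow> bool" where
  "antilinear_isometric_involution N J \<longleftrightarrow>
     (\<forall>v\<in>carrier_vec N. J v \<in> carrier_vec N) \<and>
     (\<forall>v\<in>carrier_vec N. \<forall>w\<in>carrier_vec N. J (v + w) = J v + J w) \<and>
     (\<forall>v\<in>carrier_vec N. \<forall>c. J (c \<cdot>\<^sub>v v) = cnj c \<cdot>\<^sub>v J v) \<and>
     (\<forall>v\<in>carrier_vec N. J v \<bullet>c J v = v \<bullet>c v) \<and>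
     (\<forall>v\<in>carrier_vec N. J (J v) = v)"

definition pi0 :: "(complex vec \<Rightarrow> complex vec) \<Rightarrow> (complex mat list \<Rightarrow> complex mat)
                    \<Rightarrow> complex mat list \<Rightarrow> complex vec \<Rightarrow> complex vec" where
  "pi0 J \<pi> a v = J (mat_adjoint (\<pi> a) *\<^sub>v J v)"

definition finite_spectral_triple ::
  "nat list \<Rightarrow> nat \<Rightarrow> (complex mat list \<Rightarrow> complex mat) \<Rightarrow> (complex vec \<Rightarrow> complex vec)
     \<Rightarrow> complex mat \<Rightarrow> bool" where
  "finite_spectral_triple ns N \<pi> J \<gamma> \<longleftrightarrow>
     (\<forall>i<length ns. ns ! i \<ge> 1) \<and>
     faithful_star_rep ns N \<pi> \<and>
     antilinear_isometric_involution N J \<and>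
     \<comment> \<open>pi^0 is a representation of the opposite algebra\<close>
     (\<forall>a\<in>alg ns. \<forall>b\<in>alg ns. \<forall>v\<in>carrier_vec N.
         pi0 J \<pi> (alg_add a b) v = pi0 J \<pi> a v + pi0 J \<pi> b v) \<and>
     (\<forall>a\<in>alg ns. \<forall>c. \<forall>v\<in>carrier_vec N.
         pi0 J \<pi> (alg_smult c a) v = c \<cdot>\<^sub>v pi0 J \<pi> a v) \<and>
     (\<forall>a\<in>alg ns. \<forall>b\<in>alg ns. \<forall>v\<in>carrier_vec N.
         pi0 J \<pi> (alg_mult a b) v = pi0 J \<pi> b (pi0 J \<pi> a v)) \<and>
     \<comment> \<open>order-zero condition [pi^0(a), pi(b)] = 0\<close>
     (\<forall>a\<in>alg ns. \<forall>b\<in>alg ns. \<forall>v\<in>carrier_vec N.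
         pi0 J \<pi> a (\<pi> b *\<^sub>v v) = \<pi> b *\<^sub>v pi0 J \<pi> a v) \<and>
     \<comment> \<open>grading\<close>
     \<gamma> \<in> carrier_mat N N \<and> mat_adjoint \<gamma> = \<gamma> \<and> \<gamma> * \<gamma> = 1\<^sub>m N \<and>
     (\<forall>v\<in>carrier_vec N. J (\<gamma> *\<^sub>v v) = \<gamma> *\<^sub>v J v) \<and>
     (\<forall>a\<in>alg ns. \<gamma> * \<pi> a = \<pi> a * \<gamma>) \<and>
     (\<exists>ps. set ps \<subseteq> alg ns \<times> alg ns \<and>
        (\<forall>v\<in>carrier_vec N.
           \<gamma> *\<^sub>v v = foldr (\<lambda>(x, y) acc. \<pi> x *\<^sub>v pi0 J \<pi> y v + acc) ps (0\<^sub>v N)))"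

definition dirac_operator ::
  "nat list \<Rightarrow> nat \<Rightarrow> (complex mat list \<Rightarrow> complex mat) \<Rightarrow> (complex vec \<Rightarrow> complex vec)
     \<Rightarrow> complex mat \<Rightarrow> complex mat \<Rightarrow> bool" where
  "dirac_operator ns N \<pi> J \<gamma> D \<longleftrightarrow>
     D \<in> carrier_mat N N \<and> mat_adjoint D = D \<and>
     (\<forall>v\<in>carrier_vec N. J (D *\<^sub>v v) = D *\<^sub>v J v) \<and>
     D * \<gamma> = - (\<gamma> * D) \<and>
     (\<forall>a\<in>alg ns. \<forall>b\<in>alg ns. \<forall>v\<in>carrier_vec N.
        pi0 J \<pi> b ((D * \<pi> a - \<pi> a * D) *\<^sub>v v) = (D * \<pi> a - \<pi> a * D) *\<^sub>v pi0 J \<pi> b v)"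

definition Omega1D ::
  "nat list \<Rightarrow> nat \<Rightarrow> (complex mat list \<Rightarrow> complex mat) \<Rightarrow> complex mat \<Rightarrow> complex mat set" where
  "Omega1D ns N \<pi> D =
     {foldr (\<lambda>(c, a, b) acc. c \<cdot>\<^sub>m (\<pi> a * (D * \<pi> b - \<pi> b * D)) + acc) ts (0\<^sub>m N N) | ts.
        set ts \<subseteq> UNIV \<times> alg ns \<times> alg ns}"

end

theory Submission
  imports Defs
begin

(* Every generator \<pi>(a)[D,\<pi>(b)] of \<Omega>\<^sup>1_D anticommutes with the grading, because D does and
   \<pi>(a), \<pi>(b) commute with it; and it commutes with every \<pi>\<^sup>0(y), by the order-zero and
   first-order conditions.  Both properties pass to linear combinations.  If \<omega> in addition
   commutes with \<pi>(\<A>), it commutes with \<gamma> = \<Sum> \<pi>(x\<^sub>m) \<pi>\<^sup>0(y\<^sub>m).  Commuting and anticommuting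
   with \<gamma> gives \<omega>\<gamma> = 0, and \<gamma>\<^sup>2 = 1 then gives \<omega> = 0. *)

lemma eq_mat_on_vecI:
  fixes A B :: "'a::semiring_1 mat"
  assumes "A \<in> carrier_mat nr nc" and "B \<in> carrier_mat nr nc"
    and "\<And>v. v \<in> carrier_vec nc \<Longrightarrow> A *\<^sub>v v = B *\<^sub>v v"
  shows "A = B"
proof (rule eq_matI)
  fix i j assume "i < dim_row B" "j < dim_col B"
  then show "A $$ (i, j) = B $$ (i, j)"
    using assms(3)[of "unit_vec nc j"] assms(1,2)
    by (auto dest!: arg_cong[where f="\<lambda>w. w $ i"])
qed (use assms in auto)

lemma smult_mat_mult_mat_vec:
  "A \<in> carrier_mat nr nc \<Longrightarrow> v \<in> carrier_vec nc \<Longrightarrow> (c \<cdot>\<^sub>m A) *\<^sub>v v = (c::'a::comm_semiring_0) \<cdot>\<^sub>v (A *\<^sub>v v)"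
  by (intro eq_vecI) (auto simp: scalar_prod_def sum_distrib_left ac_simps)

lemma zero_mat_mult_vec: "v \<in> carrier_vec nc \<Longrightarrow> 0\<^sub>m nr nc *\<^sub>v v = (0\<^sub>v nr :: 'a::semiring_0 vec)"
  by (intro eq_vecI) (auto simp: scalar_prod_def)

lemma mult_mat_vec_zero: "A \<in> carrier_mat nr nc \<Longrightarrow> A *\<^sub>v 0\<^sub>v nc = (0\<^sub>v nr :: 'a::semiring_0 vec)"
  by (intro eq_vecI) (auto simp: scalar_prod_def)

lemma mat_adjoint_carrier: "A \<in> carrier_mat nr nc \<Longrightarrow> mat_adjoint A \<in> carrier_mat nc nr"
  unfolding mat_adjoint_def by auto

lemma uminus_minus_uminus_mat:
  "A \<in> carrier_mat nr nc \<Longrightarrow> B \<in> carrier_mat nr nc \<Longrightarrow> - A - - B = - (A - B :: 'a::ab_group_add mat)"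
  by (intro eq_matI) auto

lemma uminus_add_uminus_mat:
  "A \<in> carrier_mat nr nc \<Longrightarrow> B \<in> carrier_mat nr nc \<Longrightarrow> - A + - B = - (A + B :: 'a::ab_group_add mat)"
  by (intro eq_matI) auto

lemma smult_uminus_mat: "(c::'a::ring) \<cdot>\<^sub>m (- A) = - (c \<cdot>\<^sub>m A)"
  by (intro eq_matI) auto

lemma mat_eq_uminus_self_iff:
  fixes A :: "'a::{idom,ring_char_0} mat"
  assumes "A \<in> carrier_mat nr nc"
  shows "A = - A \<longleftrightarrow> A = 0\<^sub>m nr nc"
proof
  assume "A = - A"
  then have "A $$ (i, j) = - A $$ (i, j)" if "i < nr" "j < nc" for i j
    using that assms by (metis carrier_matD index_uminus_mat(1))
  then show "A = 0\<^sub>m nr nc"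
    using assms by (intro eq_matI) auto
qed (use assms in auto)

lemma commuting_anticommuting_mat_eq_zero:
  fixes g A :: "'a::{idom,ring_char_0} mat"
  assumes g: "g \<in> carrier_mat n n" and A: "A \<in> carrier_mat n n" and "g * g = 1\<^sub>m n"
    and "g * A = - (A * g)" and "g * A = A * g"
  shows "A = 0\<^sub>m n n"
proof -
  have "A * g = - (A * g)" using assms(4,5) by simp
  then have "A * g = 0\<^sub>m n n"
    using g A by (simp add: mat_eq_uminus_self_iff[of _ n n])
  then have "(A * g) * g = 0\<^sub>m n n" using g by simp
  then show ?thesis using assms(3) g A by simp
qed

lemmas square_mat_distribs =
  mult_minus_distrib_mat[where nr=n and n=n and nc=n] minus_mult_distrib_mat[where nr=n and n=n and nc=n]
  mult_add_distrib_mat[where nr=n and n=n and nc=n] add_mult_distrib_mat[where nr=n and n=n and nc=n]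
  for n

lemma anticommute_commutator:
  fixes g D Q :: "'a::ring mat"
  assumes g: "g \<in> carrier_mat n n" and D: "D \<in> carrier_mat n n" and Q: "Q \<in> carrier_mat n n"
    and gD: "g * D = - (D * g)" and gQ: "g * Q = Q * g"
  shows "g * (D * Q - Q * D) = - ((D * Q - Q * D) * g)"
proof -
  have "g * (D * Q - Q * D) = (g * D) * Q - (g * Q) * D"
    using g D Q by (simp add: square_mat_distribs[where n=n])
  also have "\<dots> = - (D * Q * g) - - (Q * D * g)"
    using g D Q gD gQ by simp
  also have "\<dots> = - ((D * Q - Q * D) * g)"
    using g D Q by (simp add: square_mat_distribs[where n=n] uminus_minus_uminus_mat[of _ n n])
  finally show ?thesis .
qed

lemma anticommute_mult_left:
  fixes g P X :: "'a::ring mat"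
  assumes g: "g \<in> carrier_mat n n" and P: "P \<in> carrier_mat n n" and X: "X \<in> carrier_mat n n"
    and gP: "g * P = P * g" and gX: "g * X = - (X * g)"
  shows "g * (P * X) = - (P * X * g)"
proof -
  have "g * (P * X) = (g * P) * X"
    using g P X by (simp add: assoc_mult_mat[of _ n n _ n _ n])
  also have "\<dots> = P * (g * X)"
    using g P X gP by simp
  also have "\<dots> = - (P * X * g)"
    using g P X gX by simp
  finally show ?thesis .
qed

lemma anticommute_smult:
  fixes g A :: "'a::comm_ring mat"
  assumes g: "g \<in> carrier_mat n n" and A: "A \<in> carrier_mat n n"
    and gA: "g * A = - (A * g)"
  shows "g * (c \<cdot>\<^sub>m A) = - ((c \<cdot>\<^sub>m A) * g)"
  using assms by (simp add: mult_smult_distrib[of _ n n] mult_smult_assoc_mat[of _ n n] smult_uminus_mat)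

lemma anticommute_add:
  fixes g A B :: "'a::ring mat"
  assumes g: "g \<in> carrier_mat n n" and A: "A \<in> carrier_mat n n" and B: "B \<in> carrier_mat n n"
    and "g * A = - (A * g)" and "g * B = - (B * g)"
  shows "g * (A + B) = - ((A + B) * g)"
  using assms by (simp add: square_mat_distribs[where n=n] uminus_add_uminus_mat[of _ n n])

definition linear_on :: "nat \<Rightarrow> ('a::comm_ring_1 vec \<Rightarrow> 'a vec) \<Rightarrow> bool" where
  "linear_on n f \<longleftrightarrow>
     (\<forall>v\<in>carrier_vec n. f v \<in> carrier_vec n) \<and>
     (\<forall>v\<in>carrier_vec n. \<forall>w\<in>carrier_vec n. f (v + w) = f v + f w) \<and>
     (\<forall>c. \<forall>v\<in>carrier_vec n. f (c \<cdot>\<^sub>v v) = c \<cdot>\<^sub>v f v)"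

definition commutes_with_map :: "nat \<Rightarrow> 'a::comm_ring_1 mat \<Rightarrow> ('a vec \<Rightarrow> 'a vec) \<Rightarrow> bool" where
  "commutes_with_map n A f \<longleftrightarrow> (\<forall>v\<in>carrier_vec n. f (A *\<^sub>v v) = A *\<^sub>v f v)"

lemma linear_on_antilinear_conjugate:
  assumes J: "antilinear_isometric_involution n J" and M: "M \<in> carrier_mat n n"
  shows "linear_on n (\<lambda>v. J (M *\<^sub>v J v))"
proof -
  have Jv: "\<And>v. v \<in> carrier_vec n \<Longrightarrow> J v \<in> carrier_vec n"
    and Jadd: "\<And>v w. v \<in> carrier_vec n \<Longrightarrow> w \<in> carrier_vec n \<Longrightarrow> J (v + w) = J v + J w"
    and Jsmult: "\<And>v c. v \<in> carrier_vec n \<Longrightarrow> J (c \<cdot>\<^sub>v v) = cnj c \<cdot>\<^sub>v J v"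
    using J unfolding antilinear_isometric_involution_def by blast+
  show ?thesis
    unfolding linear_on_def
  proof (intro conjI ballI allI)
    fix v w :: "complex vec" and c :: complex
    assume v: "v \<in> carrier_vec n" and w: "w \<in> carrier_vec n"
    show "J (M *\<^sub>v J v) \<in> carrier_vec n" using Jv v M by simp
    show "J (M *\<^sub>v J (v + w)) = J (M *\<^sub>v J v) + J (M *\<^sub>v J w)"
      using Jv Jadd v w M by (simp add: mult_add_distrib_mat_vec[of _ n n])
    show "J (M *\<^sub>v J (c \<cdot>\<^sub>v v)) = c \<cdot>\<^sub>v J (M *\<^sub>v J v)"
      using Jv Jsmult v M by (simp add: mult_mat_vec[of _ n n])
  qed
qed

lemma linear_on_carrier: "linear_on n f \<Longrightarrow> v \<in> carrier_vec n \<Longrightarrow> f v \<in> carrier_vec n"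
  unfolding linear_on_def by blast

lemma linear_on_zero:
  assumes "linear_on n f" shows "f (0\<^sub>v n) = 0\<^sub>v n"
proof -
  have "f (0\<^sub>v n) = f (0 \<cdot>\<^sub>v 0\<^sub>v n)" by (intro arg_cong[where f=f] eq_vecI) auto
  also have "\<dots> = 0 \<cdot>\<^sub>v f (0\<^sub>v n)" using assms zero_carrier_vec unfolding linear_on_def by blast
  also have "\<dots> = 0\<^sub>v n" using linear_on_carrier[OF assms, of "0\<^sub>v n"] by auto
  finally show ?thesis .
qed

lemma commutes_with_map_zero:
  "linear_on n f \<Longrightarrow> commutes_with_map n (0\<^sub>m n n) f"
  unfolding commutes_with_map_def by (simp add: linear_on_zero linear_on_carrier zero_mat_mult_vec)

lemma commutes_with_map_add:
  assumes f: "linear_on n f" and A: "A \<in> carrier_mat n n" and B: "B \<in> carrier_mat n n"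
    and fA: "commutes_with_map n A f" and fB: "commutes_with_map n B f"
  shows "commutes_with_map n (A + B) f"
  unfolding commutes_with_map_def
proof
  fix v :: "'a vec" assume v: "v \<in> carrier_vec n"
  have "f ((A + B) *\<^sub>v v) = f (A *\<^sub>v v) + f (B *\<^sub>v v)"
    using f A B v unfolding linear_on_def by (simp add: add_mult_distrib_mat_vec[of _ n n])
  also have "\<dots> = (A + B) *\<^sub>v f v"
    using fA fB A B v linear_on_carrier[OF f v]
    unfolding commutes_with_map_def by (simp add: add_mult_distrib_mat_vec[of _ n n])
  finally show "f ((A + B) *\<^sub>v v) = (A + B) *\<^sub>v f v" .
qed

lemma commutes_with_map_smult:
  assumes f: "linear_on n f" and A: "A \<in> carrier_mat n n" and fA: "commutes_with_map n A f"
  shows "commutes_with_map n (c \<cdot>\<^sub>m A) f"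
  unfolding commutes_with_map_def
proof
  fix v :: "'a vec" assume v: "v \<in> carrier_vec n"
  have "f ((c \<cdot>\<^sub>m A) *\<^sub>v v) = c \<cdot>\<^sub>v f (A *\<^sub>v v)"
    using f A v unfolding linear_on_def by (simp add: smult_mat_mult_mat_vec[of _ n n])
  also have "\<dots> = (c \<cdot>\<^sub>m A) *\<^sub>v f v"
    using fA A v linear_on_carrier[OF f v]
    unfolding commutes_with_map_def by (simp add: smult_mat_mult_mat_vec[of _ n n])
  finally show "f ((c \<cdot>\<^sub>m A) *\<^sub>v v) = (c \<cdot>\<^sub>m A) *\<^sub>v f v" .
qed

lemma commutes_with_map_mult:
  assumes f: "linear_on n f" and A: "A \<in> carrier_mat n n" and B: "B \<in> carrier_mat n n"
    and fA: "commutes_with_map n A f" and fB: "commutes_with_map n B f"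
  shows "commutes_with_map n (A * B) f"
  unfolding commutes_with_map_def
proof
  fix v :: "'a vec" assume v: "v \<in> carrier_vec n"
  have "f ((A * B) *\<^sub>v v) = A *\<^sub>v f (B *\<^sub>v v)"
    using fA A B v unfolding commutes_with_map_def by simp
  also have "\<dots> = (A * B) *\<^sub>v f v"
    using fB A B v linear_on_carrier[OF f v] unfolding commutes_with_map_def by simp
  finally show "f ((A * B) *\<^sub>v v) = (A * B) *\<^sub>v f v" .
qed

lemma pi0_linear_on:
  "antilinear_isometric_involution n J \<Longrightarrow> \<pi> a \<in> carrier_mat n n \<Longrightarrow> linear_on n (pi0 J \<pi> a)"
  unfolding pi0_def by (rule linear_on_antilinear_conjugate) (auto intro: mat_adjoint_carrier)

lemma finite_spectral_triple_rep_carrier: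
  "finite_spectral_triple ns N \<pi> J \<gamma> \<Longrightarrow> a \<in> alg ns \<Longrightarrow> \<pi> a \<in> carrier_mat N N"
  unfolding finite_spectral_triple_def faithful_star_rep_def by blast

lemma finite_spectral_triple_pi0_linear_on:
  assumes "finite_spectral_triple ns N \<pi> J \<gamma>" and "a \<in> alg ns"
  shows "linear_on N (pi0 J \<pi> a)"
proof (rule pi0_linear_on)
  show "antilinear_isometric_involution N J"
    using assms(1) unfolding finite_spectral_triple_def by blast
qed (rule finite_spectral_triple_rep_carrier[OF assms])

lemma finite_spectral_triple_order_zero:
  "finite_spectral_triple ns N \<pi> J \<gamma> \<Longrightarrow> a \<in> alg ns \<Longrightarrow> b \<in> alg ns \<Longrightarrow>
     commutes_with_map N (\<pi> a) (pi0 J \<pi> b)"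
  unfolding finite_spectral_triple_def commutes_with_map_def by blast

lemma dirac_operator_first_order:
  "dirac_operator ns N \<pi> J \<gamma> D \<Longrightarrow> a \<in> alg ns \<Longrightarrow> b \<in> alg ns \<Longrightarrow>
     commutes_with_map N (D * \<pi> a - \<pi> a * D) (pi0 J \<pi> b)"
  unfolding dirac_operator_def commutes_with_map_def by blast

lemma Omega1D_induct:
  assumes "\<omega> \<in> Omega1D ns N \<pi> D"
    and rep: "\<And>a. a \<in> alg ns \<Longrightarrow> \<pi> a \<in> carrier_mat N N" and D: "D \<in> carrier_mat N N"
    and zero: "P (0\<^sub>m N N)"
    and add: "\<And>A B. A \<in> carrier_mat N N \<Longrightarrow> B \<in> carrier_mat N N \<Longrightarrow> P A \<Longrightarrow> P B \<Longrightarrow> P (A + B)"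
    and generator: "\<And>c a b. a \<in> alg ns \<Longrightarrow> b \<in> alg ns \<Longrightarrow> P (c \<cdot>\<^sub>m (\<pi> a * (D * \<pi> b - \<pi> b * D)))"
  shows "P \<omega>"
proof -
  obtain ts where ts: "set ts \<subseteq> UNIV \<times> alg ns \<times> alg ns"
    and \<omega>: "\<omega> = foldr (\<lambda>(c, a, b) acc. c \<cdot>\<^sub>m (\<pi> a * (D * \<pi> b - \<pi> b * D)) + acc) ts (0\<^sub>m N N)"
    using assms(1) unfolding Omega1D_def by blast
  from ts have "\<omega> \<in> carrier_mat N N \<and> P \<omega>"
    unfolding \<omega>
  proof (induction ts)
    case Nil
    then show ?case using zero by simp
  next
    case (Cons t ts)
    obtain c a b where t: "t = (c, a, b)" by (cases t) auto
    with Cons.prems have a: "a \<in> alg ns" and b: "b \<in> alg ns" by auto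
    have "c \<cdot>\<^sub>m (\<pi> a * (D * \<pi> b - \<pi> b * D)) \<in> carrier_mat N N"
      using rep[OF a] rep[OF b] D by auto
    with Cons t a b show ?case by (auto intro!: add generator)
  qed
  then show ?thesis ..
qed

lemma Omega1D_carrier:
  assumes "finite_spectral_triple ns N \<pi> J \<gamma>" and "dirac_operator ns N \<pi> J \<gamma> D"
    and "\<omega> \<in> Omega1D ns N \<pi> D"
  shows "\<omega> \<in> carrier_mat N N"
  using assms(3) finite_spectral_triple_rep_carrier[OF assms(1)]
proof (rule Omega1D_induct)
  show "D \<in> carrier_mat N N" using assms(2) unfolding dirac_operator_def by blast
  then show "c \<cdot>\<^sub>m (\<pi> a * (D * \<pi> b - \<pi> b * D)) \<in> carrier_mat N N"
    if "a \<in> alg ns" "b \<in> alg ns" for c a b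
    using finite_spectral_triple_rep_carrier[OF assms(1) that(1)]
      finite_spectral_triple_rep_carrier[OF assms(1) that(2)] by auto
qed auto

lemma Omega1D_anticommutes_grading:
  assumes triple: "finite_spectral_triple ns N \<pi> J \<gamma>" and "dirac_operator ns N \<pi> J \<gamma> D"
    and "\<omega> \<in> Omega1D ns N \<pi> D"
  shows "\<gamma> * \<omega> = - (\<omega> * \<gamma>)"
proof -
  have \<gamma>: "\<gamma> \<in> carrier_mat N N" and \<gamma>\<pi>: "\<And>a. a \<in> alg ns \<Longrightarrow> \<gamma> * \<pi> a = \<pi> a * \<gamma>"
    using triple unfolding finite_spectral_triple_def by blast+
  have D: "D \<in> carrier_mat N N" and "D * \<gamma> = - (\<gamma> * D)"
    using assms(2) unfolding dirac_operator_def by blast+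
  then have \<gamma>D: "\<gamma> * D = - (D * \<gamma>)" by simp
  note rep = finite_spectral_triple_rep_carrier[OF triple]
  show ?thesis
    using assms(3) rep D
  proof (rule Omega1D_induct)
    show "\<gamma> * 0\<^sub>m N N = - (0\<^sub>m N N * \<gamma>)" using \<gamma> by (intro eq_matI) auto
  next
    fix A B assume "A \<in> carrier_mat N N" "B \<in> carrier_mat N N"
      "\<gamma> * A = - (A * \<gamma>)" "\<gamma> * B = - (B * \<gamma>)"
    then show "\<gamma> * (A + B) = - ((A + B) * \<gamma>)" by (rule anticommute_add[OF \<gamma>])
  next
    fix c a b assume a: "a \<in> alg ns" and b: "b \<in> alg ns"
    have "\<gamma> * (D * \<pi> b - \<pi> b * D) = - ((D * \<pi> b - \<pi> b * D) * \<gamma>)"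
      by (rule anticommute_commutator[OF \<gamma> D rep[OF b] \<gamma>D \<gamma>\<pi>[OF b]])
    then have "\<gamma> * (\<pi> a * (D * \<pi> b - \<pi> b * D)) = - (\<pi> a * (D * \<pi> b - \<pi> b * D) * \<gamma>)"
      using D rep[OF b] by (intro anticommute_mult_left[OF \<gamma> rep[OF a] _ \<gamma>\<pi>[OF a]]) auto
    then show "\<gamma> * (c \<cdot>\<^sub>m (\<pi> a * (D * \<pi> b - \<pi> b * D))) = - (c \<cdot>\<^sub>m (\<pi> a * (D * \<pi> b - \<pi> b * D)) * \<gamma>)"
      using D rep[OF a] rep[OF b] by (intro anticommute_smult[OF \<gamma>]) auto
  qed
qed

lemma Omega1D_commutes_with_pi0:
  assumes triple: "finite_spectral_triple ns N \<pi> J \<gamma>" and dirac: "dirac_operator ns N \<pi> J \<gamma> D"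
    and "\<omega> \<in> Omega1D ns N \<pi> D" and y: "y \<in> alg ns"
  shows "commutes_with_map N \<omega> (pi0 J \<pi> y)"
proof -
  have D: "D \<in> carrier_mat N N"
    using dirac unfolding dirac_operator_def by blast
  note rep = finite_spectral_triple_rep_carrier[OF triple]
  note f = finite_spectral_triple_pi0_linear_on[OF triple y]
  show ?thesis
    using assms(3) rep D
  proof (rule Omega1D_induct)
    show "commutes_with_map N (0\<^sub>m N N) (pi0 J \<pi> y)" by (rule commutes_with_map_zero[OF f])
  next
    fix A B assume "A \<in> carrier_mat N N" "B \<in> carrier_mat N N"
      "commutes_with_map N A (pi0 J \<pi> y)" "commutes_with_map N B (pi0 J \<pi> y)"
    then show "commutes_with_map N (A + B) (pi0 J \<pi> y)" by (rule commutes_with_map_add[OF f])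
  next
    fix c a b assume a: "a \<in> alg ns" and b: "b \<in> alg ns"
    have "commutes_with_map N (\<pi> a * (D * \<pi> b - \<pi> b * D)) (pi0 J \<pi> y)"
      using D rep[OF b]
      by (intro commutes_with_map_mult[OF f rep[OF a]] finite_spectral_triple_order_zero[OF triple a y]
          dirac_operator_first_order[OF dirac b y]) auto
    then show "commutes_with_map N (c \<cdot>\<^sub>m (\<pi> a * (D * \<pi> b - \<pi> b * D))) (pi0 J \<pi> y)"
      using D rep[OF a] rep[OF b] by (intro commutes_with_map_smult[OF f]) auto
  qed
qed

lemma commutes_with_map_foldr_sum:
  fixes W :: "'a::comm_ring_1 mat"
  assumes W: "W \<in> carrier_mat n n"
    and ps: "\<And>x y. (x, y) \<in> set ps \<Longrightarrow>
      X x \<in> carrier_mat n n \<and> W * X x = X x * W \<and> linear_on n (F y) \<and> commutes_with_map n W (F y)"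
  shows "commutes_with_map n W (\<lambda>v. foldr (\<lambda>(x, y) acc. X x *\<^sub>v F y v + acc) ps (0\<^sub>v n))"
proof -
  have "\<forall>v\<in>carrier_vec n. foldr (\<lambda>(x, y) acc. X x *\<^sub>v F y v + acc) ps (0\<^sub>v n) \<in> carrier_vec n \<and>
    W *\<^sub>v foldr (\<lambda>(x, y) acc. X x *\<^sub>v F y v + acc) ps (0\<^sub>v n) =
    foldr (\<lambda>(x, y) acc. X x *\<^sub>v F y (W *\<^sub>v v) + acc) ps (0\<^sub>v n)"
    using ps
  proof (induction ps)
    case Nil
    then show ?case using W by (simp add: mult_mat_vec_zero)
  next
    case (Cons p ps)
    obtain x y where p: "p = (x, y)" by (cases p) auto
    with Cons.prems have X: "X x \<in> carrier_mat n n" and WX: "W * X x = X x * W"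
      and f: "linear_on n (F y)" and Wf: "commutes_with_map n W (F y)" by auto
    let ?acc = "\<lambda>v. foldr (\<lambda>(x, y) acc. X x *\<^sub>v F y v + acc) ps (0\<^sub>v n)"
    have IH: "?acc v \<in> carrier_vec n" "W *\<^sub>v ?acc v = ?acc (W *\<^sub>v v)" if "v \<in> carrier_vec n" for v
      using Cons that by auto
    have step: "W *\<^sub>v (X x *\<^sub>v F y v) = X x *\<^sub>v F y (W *\<^sub>v v)" if v: "v \<in> carrier_vec n" for v
    proof -
      have Fv: "F y v \<in> carrier_vec n" by (rule linear_on_carrier[OF f v])
      then have "W *\<^sub>v (X x *\<^sub>v F y v) = X x *\<^sub>v (W *\<^sub>v F y v)"
        using W X by (simp flip: assoc_mult_mat_vec add: WX)
      also have "\<dots> = X x *\<^sub>v F y (W *\<^sub>v v)"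
        using Wf v unfolding commutes_with_map_def by simp
      finally show ?thesis .
    qed
    show ?case
      using IH step p W X linear_on_carrier[OF f] by (auto simp: mult_add_distrib_mat_vec[of _ n n])
  qed
  then show ?thesis unfolding commutes_with_map_def by simp
qed

lemma finite_spectral_triple_grading_commutes:
  assumes triple: "finite_spectral_triple ns N \<pi> J \<gamma>" and W: "W \<in> carrier_mat N N"
    and W\<pi>: "\<And>a. a \<in> alg ns \<Longrightarrow> \<pi> a * W = W * \<pi> a"
    and Wpi0: "\<And>a. a \<in> alg ns \<Longrightarrow> commutes_with_map N W (pi0 J \<pi> a)"
  shows "\<gamma> * W = W * \<gamma>"
proof -
  have \<gamma>: "\<gamma> \<in> carrier_mat N N" using triple unfolding finite_spectral_triple_def by blast
  obtain ps where ps: "set ps \<subseteq> alg ns \<times> alg ns"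
    and \<gamma>_sum: "\<And>v. v \<in> carrier_vec N \<Longrightarrow>
      \<gamma> *\<^sub>v v = foldr (\<lambda>(x, y) acc. \<pi> x *\<^sub>v pi0 J \<pi> y v + acc) ps (0\<^sub>v N)"
    using triple unfolding finite_spectral_triple_def by blast
  have "commutes_with_map N W (\<lambda>v. foldr (\<lambda>(x, y) acc. \<pi> x *\<^sub>v pi0 J \<pi> y v + acc) ps (0\<^sub>v N))"
    using ps W\<pi> Wpi0 finite_spectral_triple_rep_carrier[OF triple]
      finite_spectral_triple_pi0_linear_on[OF triple]
    by (intro commutes_with_map_foldr_sum[OF W]) (auto simp: subset_iff)
  then have "(\<gamma> * W) *\<^sub>v v = (W * \<gamma>) *\<^sub>v v" if "v \<in> carrier_vec N" for v
    using that \<gamma> W \<gamma>_sum unfolding commutes_with_map_def by simp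
  then show ?thesis using \<gamma> W by (intro eq_mat_on_vecI) auto
qed

theorem mainTheorem9:
  fixes ns :: "nat list" and N :: nat
    and \<pi> :: "complex mat list \<Rightarrow> complex mat"
    and J :: "complex vec \<Rightarrow> complex vec"
    and \<gamma> D \<omega> :: "complex mat"
  assumes "finite_spectral_triple ns N \<pi> J \<gamma>"
    and "dirac_operator ns N \<pi> J \<gamma> D"
    and "\<omega> \<in> Omega1D ns N \<pi> D"
    and "\<forall>a\<in>alg ns. \<pi> a * \<omega> = \<omega> * \<pi> a"
  shows "\<omega> = 0\<^sub>m N N"
proof (rule commuting_anticommuting_mat_eq_zero)
  show \<gamma>: "\<gamma> \<in> carrier_mat N N" and "\<gamma> * \<gamma> = 1\<^sub>m N"
    using assms(1) unfolding finite_spectral_triple_def by blast+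
  show \<omega>: "\<omega> \<in> carrier_mat N N"
    using Omega1D_carrier[OF assms(1-3)] .
  show "\<gamma> * \<omega> = - (\<omega> * \<gamma>)"
    using Omega1D_anticommutes_grading[OF assms(1-3)] .
  show "\<gamma> * \<omega> = \<omega> * \<gamma>"
    using assms(4) Omega1D_commutes_with_pi0[OF assms(1-3)]
    by (intro finite_spectral_triple_grading_commutes[OF assms(1) \<omega>]) auto
qed

end
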